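(* Let $f\in K^{\times}$ satisfy $f'=af$ for some $a\in k$, and let $g\in K$ satisfy a nonzero homogeneous linear differential equation with coefficients in $k$. Assume $f=P(g)$ for some nonconstant polynomial $P$ with coefficients in $k$. Then there exist $\theta\in K$ with $\theta'/\theta\in k$, an integer $n\in\mathbb{Z}_{\geq 0}$ and $c,d\in k$ such that $$f=\theta^{n}\quad\text{and}\quad g=c+d\theta.$$
   Context: $K$ is a differential field of characteristic zero (derivation $y\mapsto y'$), $k\subset K$ is an algebraically closed differential subfield, and $K$ and $k$ have the same field of constants $C$. *)

theory Defs
  imports "HOL-Computational_Algebra.Polynomial"
begin

definition derivation :: "('a::field \<Rightarrow> 'a) \<Rightarrow> bool" where
  "derivation D \<longleftrightarrow> (\<forall>x y. D (x + y) = D x + D y) \<and> (\<forall>x y. D (x * y) = x * D y + D x * y)"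

definition is_subfield :: "'a::field set \<Rightarrow> bool" where
  "is_subfield k \<longleftrightarrow> 0 \<in> k \<and> 1 \<in> k \<and> (\<forall>x\<in>k. \<forall>y\<in>k. x + y \<in> k \<and> x * y \<in> k)
     \<and> (\<forall>x\<in>k. - x \<in> k) \<and> (\<forall>x\<in>k. x \<noteq> 0 \<longrightarrow> inverse x \<in> k)"

definition differential_subfield :: "('a::field \<Rightarrow> 'a) \<Rightarrow> 'a set \<Rightarrow> bool" where
  "differential_subfield D k \<longleftrightarrow> is_subfield k \<and> (\<forall>x\<in>k. D x \<in> k)"

definition alg_closed_subfield :: "'a::field set \<Rightarrow> bool" where
  "alg_closed_subfield k \<longleftrightarrow> is_subfield k \<and>
     (\<forall>p. set (coeffs p) \<subseteq> k \<and> degree p \<ge> 1 \<longrightarrow> (\<exists>x\<in>k. poly p x = 0))"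

definition constants :: "('a::field \<Rightarrow> 'a) \<Rightarrow> 'a set" where
  "constants D = {x. D x = 0}"

definition satisfies_lin_ode :: "('a::field \<Rightarrow> 'a) \<Rightarrow> 'a set \<Rightarrow> 'a \<Rightarrow> bool" where
  "satisfies_lin_ode D k y \<longleftrightarrow> (\<exists>m::nat. \<exists>a::nat \<Rightarrow> 'a.
     (\<forall>i\<le>m. a i \<in> k) \<and> (\<exists>i\<le>m. a i \<noteq> 0) \<and> (\<Sum>i\<le>m. a i * (D ^^ i) y) = 0)"

end

theory Submission
  imports Defs
begin

text \<open>
  If g lies in k the claim is trivial, so let g be transcendental over the algebraically closed
  field k. Differentiating f = P(g) shows that D g = N(g) / M(g) for polynomials M, N over k,
  which we take in lowest terms. If M has a root \<rho> of multiplicity p, the pole order of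
  D^i g at \<rho> is i(p + 1) - 1; if M is constant and deg N \<ge> 2, the degree of D^i g in g
  is 1 + i(deg N - 1). Either way the highest derivative in a linear differential equation
  over k cannot be cancelled, so D g = \<alpha> g + \<beta>. Comparing the lowest terms of
  D(P(g)) = a P(g) at a root r of P then gives D(g - r) = \<alpha> (g - r); two distinct roots r, s
  would make (g - r) / (s - r) a constant, hence an element of k. So P = u (X - r)^e, and
  \<theta> = v (g - r) with v^e = u has the required form.
\<close>

locale field_derivation =
  fixes D :: "'a::field \<Rightarrow> 'a"
  assumes derivation: "derivation D"
begin

lemma D_add: "D (x + y) = D x + D y"
  using derivation by (simp add: derivation_def)

lemma D_mult: "D (x * y) = x * D y + D x * y"
  using derivation by (simp add: derivation_def)

lemma D_0 [simp]: "D 0 = 0"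
  using D_add[of 0 0] by (simp only: add_0_left add_cancel_right_right)

lemma D_1 [simp]: "D 1 = 0"
  using D_mult[of 1 1] by (simp only: mult_1_left mult_1_right add_cancel_right_right)

lemma D_minus: "D (- x) = - D x"
  using D_add[of x "- x"] by (simp add: add_eq_0_iff2)

lemma D_diff: "D (x - y) = D x - D y"
  using D_add[of x "- y"] by (simp add: D_minus)

lemma D_power: "D (x ^ n) = of_nat n * x ^ (n - 1) * D x"
proof (induction n)
  case (Suc n)
  then show ?case
    by (cases n) (auto simp: D_mult algebra_simps)
qed simp

lemma D_poly: "D (poly B x) = poly (map_poly D B) x + poly (pderiv B) x * D x"
  by (induction B) (simp_all add: map_poly_pCons pderiv_pCons D_add D_mult algebra_simps)

lemma D_divide_eq_0_if_same_log_derivative: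
  assumes "w \<noteq> 0" "D y = \<alpha> * y" "D w = \<alpha> * w"
  shows "D (y / w) = 0"
proof -
  have "D y = y / w * D w + D (y / w) * w"
    using D_mult[of "y / w" w] assms(1) by simp
  also have "y / w * D w = D y"
    using assms by simp
  finally have "D (y / w) * w = 0"
    by simp
  then show ?thesis
    using assms(1) by simp
qed

end

definition poly_over :: "'a::zero set \<Rightarrow> 'a poly \<Rightarrow> bool" where
  "poly_over k p \<longleftrightarrow> (\<forall>i. coeff p i \<in> k)"

lemma poly_over_pCons_iff: "poly_over k (pCons a p) \<longleftrightarrow> a \<in> k \<and> poly_over k p"
  unfolding poly_over_def by (auto simp: coeff_pCons split: nat.splits)

lemma poly_degree_le_1:
  assumes "degree p \<le> 1"
  shows "poly p x = coeff p 1 * x + coeff p 0"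
proof -
  obtain a q where p: "p = pCons a q"
    by (cases p) blast
  then have "degree q = 0"
    using assms by (cases "q = 0") auto
  then obtain b where "q = [:b:]"
    by (metis degree_eq_zeroE)
  then show ?thesis
    using p by (simp add: algebra_simps)
qed

lemma satisfies_lin_ode_top_coeff:
  assumes "satisfies_lin_ode D k y"
  shows "\<exists>m c. (\<forall>i\<le>m. c i \<in> k) \<and> c m \<noteq> 0 \<and> (\<Sum>i\<le>m. c i * (D ^^ i) y) = 0"
proof -
  obtain m c where c: "\<forall>i\<le>m. c i \<in> k" "\<exists>i\<le>m. c i \<noteq> 0" "(\<Sum>i\<le>m. c i * (D ^^ i) y) = 0"
    using assms by (auto simp: satisfies_lin_ode_def)
  define top where "top = Max {i. i \<le> m \<and> c i \<noteq> 0}"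
  have fin: "finite {i. i \<le> m \<and> c i \<noteq> 0}" and ne: "{i. i \<le> m \<and> c i \<noteq> 0} \<noteq> {}"
    using c(2) by auto
  have top: "top \<le> m" "c top \<noteq> 0"
    using Max_in[OF fin ne] unfolding top_def by auto
  have above_top: "i \<le> top" if "i \<le> m" "c i \<noteq> 0" for i
    using Max_ge[OF fin] that unfolding top_def by auto
  have "(\<Sum>i\<le>m. c i * (D ^^ i) y) = (\<Sum>i\<le>top. c i * (D ^^ i) y)"
  proof (rule sum.mono_neutral_right)
    show "\<forall>i\<in>{..m} - {..top}. c i * (D ^^ i) y = 0"
      using above_top by fastforce
  qed (use top in auto)
  then show ?thesis
    using c top by (intro exI[of _ top] exI[of _ c]) auto
qed

locale subfield =
  fixes k :: "'a::field set"
  assumes is_subfield: "is_subfield k"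
begin

lemma zero_closed [simp]: "0 \<in> k"
  and one_closed [simp]: "1 \<in> k"
  and add_closed: "x \<in> k \<Longrightarrow> y \<in> k \<Longrightarrow> x + y \<in> k"
  and mult_closed: "x \<in> k \<Longrightarrow> y \<in> k \<Longrightarrow> x * y \<in> k"
  and uminus_closed: "x \<in> k \<Longrightarrow> - x \<in> k"
  and inverse_closed: "x \<in> k \<Longrightarrow> inverse x \<in> k"
  using is_subfield by (auto simp: is_subfield_def)

lemma diff_closed: "x \<in> k \<Longrightarrow> y \<in> k \<Longrightarrow> x - y \<in> k"
  using add_closed uminus_closed by (metis diff_conv_add_uminus)

lemma divide_closed: "x \<in> k \<Longrightarrow> y \<in> k \<Longrightarrow> x / y \<in> k"
  using mult_closed inverse_closed by (simp add: divide_inverse)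

lemma of_nat_closed: "of_nat n \<in> k"
  by (induction n) (auto intro: add_closed)

lemma power_closed: "x \<in> k \<Longrightarrow> x ^ n \<in> k"
  by (induction n) (auto intro: mult_closed)

lemma sum_closed: "(\<And>i. i \<in> A \<Longrightarrow> f i \<in> k) \<Longrightarrow> sum f A \<in> k"
  by (induction A rule: infinite_finite_induct) (auto intro: add_closed)

lemma poly_over_iff_coeffs: "poly_over k p \<longleftrightarrow> set (coeffs p) \<subseteq> k"
  unfolding poly_over_def using forall_coeffs_conv[of "\<lambda>c. c \<in> k" p] by auto

lemma poly_over_0 [simp]: "poly_over k 0"
  by (simp add: poly_over_def)

lemma poly_over_const: "c \<in> k \<Longrightarrow> poly_over k [:c:]"
  by (simp add: poly_over_pCons_iff)

lemma poly_over_1 [simp]: "poly_over k 1"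
  using poly_over_const[OF one_closed] by (simp add: one_pCons)

lemma poly_over_linear: "r \<in> k \<Longrightarrow> poly_over k [:- r, 1:]"
  and poly_over_X: "poly_over k [:0, 1:]"
  by (simp_all add: poly_over_pCons_iff uminus_closed)

lemma poly_over_add: "poly_over k p \<Longrightarrow> poly_over k q \<Longrightarrow> poly_over k (p + q)"
  by (simp add: poly_over_def add_closed)

lemma poly_over_diff: "poly_over k p \<Longrightarrow> poly_over k q \<Longrightarrow> poly_over k (p - q)"
  by (simp add: poly_over_def diff_closed)

lemma poly_over_smult: "c \<in> k \<Longrightarrow> poly_over k p \<Longrightarrow> poly_over k (smult c p)"
  by (simp add: poly_over_def mult_closed)

lemma poly_over_mult: "poly_over k p \<Longrightarrow> poly_over k q \<Longrightarrow> poly_over k (p * q)"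
  by (simp add: poly_over_def coeff_mult sum_closed mult_closed)

lemma poly_over_power: "poly_over k p \<Longrightarrow> poly_over k (p ^ n)"
  by (induction n) (auto intro: poly_over_mult)

lemma poly_over_sum: "(\<And>i. i \<in> A \<Longrightarrow> poly_over k (f i)) \<Longrightarrow> poly_over k (sum f A)"
  by (induction A rule: infinite_finite_induct) (auto intro: poly_over_add)

lemma poly_over_pderiv: "poly_over k p \<Longrightarrow> poly_over k (pderiv p)"
  unfolding poly_over_def coeff_pderiv by (metis mult_closed of_nat_closed)

lemma poly_over_monom: "c \<in> k \<Longrightarrow> poly_over k (monom c n)"
  by (simp add: poly_over_def)

lemmas poly_over_intros = poly_over_const poly_over_linear poly_over_X poly_over_add
  poly_over_diff poly_over_smult poly_over_mult poly_over_power poly_over_sum poly_over_pderiv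
  poly_over_monom

lemma poly_closed: "poly_over k p \<Longrightarrow> x \<in> k \<Longrightarrow> poly p x \<in> k"
  by (simp add: poly_altdef poly_over_def sum_closed mult_closed power_closed)

lemma poly_over_synthetic_div: "poly_over k p \<Longrightarrow> r \<in> k \<Longrightarrow> poly_over k (synthetic_div p r)"
  by (induction p) (simp_all add: poly_over_pCons_iff poly_closed)

lemma poly_over_factor_root:
  assumes "poly_over k B" "B \<noteq> 0" "r \<in> k"
  shows "\<exists>e B'. poly_over k B' \<and> B = [:- r, 1:] ^ e * B' \<and> poly B' r \<noteq> 0"
  using assms(1,2)
proof (induction "degree B" arbitrary: B rule: less_induct)
  case less
  show ?case
  proof (cases "poly B r = 0")
    case False
    then show ?thesis
      using less.prems by (intro exI[of _ 0] exI[of _ B]) simp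
  next
    case True
    define S where "S = synthetic_div B r"
    have B: "B = [:- r, 1:] * S"
      using synthetic_div_correct'[of r B] True by (simp add: S_def)
    have "S \<noteq> 0"
      using B less.prems(2) by auto
    then have "degree S < degree B"
      unfolding B by (subst degree_mult_eq) auto
    moreover have "poly_over k S"
      using poly_over_synthetic_div less.prems(1) assms(3) by (simp add: S_def)
    ultimately obtain e B' where B': "poly_over k B'" "S = [:- r, 1:] ^ e * B'" "poly B' r \<noteq> 0"
      using less.hyps[of S] \<open>S \<noteq> 0\<close> by blast
    moreover have "B = [:- r, 1:] ^ Suc e * B'"
      unfolding B B'(2) by (simp only: power_Suc mult.assoc)
    ultimately show ?thesis
      by blast
  qed
qed

lemma reduced_fraction_representation:
  assumes "g \<notin> k" "poly_over k M" "M \<noteq> 0" "poly_over k N" "x * poly M g = poly N g"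
  shows "\<exists>M' N'. poly_over k M' \<and> M' \<noteq> 0 \<and> poly_over k N' \<and> x * poly M' g = poly N' g \<and>
           (\<forall>\<rho>\<in>k. poly M' \<rho> = 0 \<longrightarrow> poly N' \<rho> \<noteq> 0)"
  using assms(2-5)
proof (induction "degree M" arbitrary: M N rule: less_induct)
  case less
  show ?case
  proof (cases "\<exists>\<rho>\<in>k. poly M \<rho> = 0 \<and> poly N \<rho> = 0")
    case False
    then show ?thesis
      using less.prems by blast
  next
    case True
    then obtain \<rho> where \<rho>: "\<rho> \<in> k" "poly M \<rho> = 0" "poly N \<rho> = 0"
      by blast
    define M' N' where "M' = synthetic_div M \<rho>" and "N' = synthetic_div N \<rho>"
    have M: "M = [:- \<rho>, 1:] * M'" and N: "N = [:- \<rho>, 1:] * N'"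
      using synthetic_div_correct'[of \<rho> M] synthetic_div_correct'[of \<rho> N] \<rho>
      by (simp_all add: M'_def N'_def)
    have "(g - \<rho>) * (x * poly M' g) = (g - \<rho>) * poly N' g"
      using less.prems(4) M N by (simp add: algebra_simps)
    moreover have "g - \<rho> \<noteq> 0"
      using assms(1) \<rho>(1) by auto
    ultimately have "x * poly M' g = poly N' g"
      by simp
    moreover have "M' \<noteq> 0"
      using M less.prems(2) by auto
    moreover from this have "degree M' < degree M"
      unfolding M by (subst degree_mult_eq) auto
    moreover have "poly_over k M'" "poly_over k N'"
      using poly_over_synthetic_div less.prems(1,3) \<rho>(1) by (simp_all add: M'_def N'_def)
    ultimately show ?thesis
      using less.hyps[of M' N'] by blast
  qed
qed

end

locale algebraically_closed_subfield =
  fixes k :: "'a::field set"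
  assumes alg_closed: "alg_closed_subfield k"

sublocale algebraically_closed_subfield \<subseteq> subfield
  using alg_closed by unfold_locales (simp add: alg_closed_subfield_def)

context algebraically_closed_subfield
begin

lemma poly_over_has_root: "poly_over k p \<Longrightarrow> degree p \<ge> 1 \<Longrightarrow> \<exists>x\<in>k. poly p x = 0"
  using alg_closed by (auto simp: alg_closed_subfield_def poly_over_iff_coeffs)

lemma poly_over_root_in:
  assumes "poly_over k B" "B \<noteq> 0" "poly B x = 0"
  shows "x \<in> k"
  using assms
proof (induction "degree B" arbitrary: B rule: less_induct)
  case less
  have "degree B \<noteq> 0"
  proof
    assume "degree B = 0"
    then obtain c where "B = [:c:]"
      by (metis degree_eq_zeroE)
    then show False
      using less.prems(2,3) by simp
  qed
  then obtain r where r: "r \<in> k" "poly B r = 0"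
    using poly_over_has_root less.prems(1) by (auto simp: Suc_le_eq)
  define S where "S = synthetic_div B r"
  have B: "B = [:- r, 1:] * S"
    using synthetic_div_correct'[of r B] r by (simp add: S_def)
  show ?case
  proof (cases "x = r")
    case False
    then have "poly S x = 0"
      using less.prems(3) B by simp
    moreover have "S \<noteq> 0"
      using B less.prems(2) by auto
    moreover from this have "degree S < degree B"
      unfolding B by (subst degree_mult_eq) auto
    moreover have "poly_over k S"
      using poly_over_synthetic_div less.prems(1) r(1) by (simp add: S_def)
    ultimately show ?thesis
      using less.hyps[of S] by blast
  qed (use r in simp)
qed

lemma poly_over_eq_0_if_root_notin:
  "g \<notin> k \<Longrightarrow> poly_over k B \<Longrightarrow> poly B g = 0 \<Longrightarrow> B = 0"
  using poly_over_root_in by blast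

lemma poly_over_relation_lifts:
  assumes "g \<notin> k" "\<forall>i\<le>m. c i \<in> k" "(\<Sum>i\<le>m. c i * u i) = 0"
    and "\<And>i. i \<le> m \<Longrightarrow> poly_over k (B i)" "\<And>i. i \<le> m \<Longrightarrow> poly (B i) g = u i * h"
  shows "(\<Sum>i\<le>m. smult (c i) (B i)) = 0"
proof (rule poly_over_eq_0_if_root_notin[OF assms(1)])
  show "poly_over k (\<Sum>i\<le>m. smult (c i) (B i))"
    using assms(2,4) by (auto intro!: poly_over_intros)
  have "poly (\<Sum>i\<le>m. smult (c i) (B i)) g = (\<Sum>i\<le>m. c i * u i) * h"
    by (simp add: poly_sum assms(5) sum_distrib_right mult.assoc)
  then show "poly (\<Sum>i\<le>m. smult (c i) (B i)) g = 0"
    using assms(3) by simp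
qed

lemma poly_over_single_root:
  assumes "poly_over k P" "degree P \<ge> 1" "r \<in> k" "\<And>s. s \<in> k \<Longrightarrow> poly P s = 0 \<Longrightarrow> s = r"
  shows "\<exists>u e. u \<in> k \<and> u \<noteq> 0 \<and> e \<ge> 1 \<and> P = smult u ([:- r, 1:] ^ e)"
proof -
  have "P \<noteq> 0"
    using assms(2) by auto
  then obtain e Q where Q: "poly_over k Q" "P = [:- r, 1:] ^ e * Q" "poly Q r \<noteq> 0"
    using poly_over_factor_root assms(1,3) by blast
  have "degree Q = 0"
  proof (rule ccontr)
    assume "degree Q \<noteq> 0"
    then obtain s where s: "s \<in> k" "poly Q s = 0"
      using poly_over_has_root Q(1) by (auto simp: Suc_le_eq)
    then have "s = r"
      using assms(4) Q(2) by simp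
    then show False
      using s(2) Q(3) by simp
  qed
  then obtain u where u: "Q = [:u:]"
    by (metis degree_eq_zeroE)
  have "u \<in> k" "u \<noteq> 0"
    using Q(1,3) u by (simp_all add: poly_over_pCons_iff)
  moreover have P: "P = smult u ([:- r, 1:] ^ e)"
    unfolding Q(2) u by simp
  moreover have "e \<ge> 1"
  proof (rule ccontr)
    assume "\<not> e \<ge> 1"
    then have "e = 0"
      by simp
    then show False
      using assms(2) P by simp
  qed
  ultimately show ?thesis
    by blast
qed

lemma nth_root_closed:
  assumes "u \<in> k" "e \<ge> 1"
  shows "\<exists>v\<in>k. v ^ e = u"
proof -
  define R where "R = monom 1 e + [:- u:]"
  have "degree R \<ge> 1"
    using assms(2) by (simp add: R_def degree_add_eq_left degree_monom_eq)
  moreover have "poly_over k R"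
    using assms(1) by (simp add: R_def poly_over_intros uminus_closed)
  ultimately obtain v where "v \<in> k" "poly R v = 0"
    using poly_over_has_root by blast
  then show ?thesis
    by (auto simp: R_def poly_monom)
qed

end

locale differential_extension = field_derivation D + algebraically_closed_subfield k
  for D :: "'a::field_char_0 \<Rightarrow> 'a" and k :: "'a set" +
  assumes D_closed: "x \<in> k \<Longrightarrow> D x \<in> k"
    and constant_in_k: "D x = 0 \<Longrightarrow> x \<in> k"
begin

lemma poly_over_map_poly_D: "poly_over k B \<Longrightarrow> poly_over k (map_poly D B)"
  by (simp add: poly_over_def coeff_map_poly D_closed)

lemma degree_map_poly_D_le: "degree (map_poly D B) \<le> degree B"
  by (rule degree_le) (simp add: coeff_map_poly coeff_eq_0)

lemma iterated_derivative_poly: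
  assumes N: "poly_over k N" "degree N \<ge> 2" and D_g: "D g = poly N g"
  shows "\<exists>B. poly_over k B \<and> degree B = 1 + i * (degree N - 1) \<and> (D ^^ i) g = poly B g"
proof (induction i)
  case 0
  show ?case
    by (intro exI[of _ "[:0, 1:]"]) (simp add: poly_over_X)
next
  case (Suc i)
  then obtain B where B: "poly_over k B" "degree B = 1 + i * (degree N - 1)" "(D ^^ i) g = poly B g"
    by blast
  have "pderiv B \<noteq> 0"
    using B(2) by (simp add: pderiv_eq_0_iff)
  then have deg: "degree (pderiv B * N) = degree B - 1 + degree N"
    using N(2) by (subst degree_mult_eq) (auto simp: degree_pderiv)
  moreover have "degree (map_poly D B) < degree (pderiv B * N)"
    using degree_map_poly_D_le[of B] deg N(2) by linarith
  ultimately have "degree (map_poly D B + pderiv B * N) = degree B - 1 + degree N"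
    by (simp add: degree_add_eq_right)
  also have "\<dots> = 1 + Suc i * (degree N - 1)"
  proof -
    obtain d where "degree N = Suc d"
      using N(2) by (cases "degree N") auto
    then show ?thesis
      using B(2) by simp
  qed
  finally have "degree (map_poly D B + pderiv B * N) = 1 + Suc i * (degree N - 1)" .
  moreover have "poly_over k (map_poly D B + pderiv B * N)"
    using B(1) N(1) by (intro poly_over_intros poly_over_map_poly_D)
  moreover have "(D ^^ Suc i) g = poly (map_poly D B + pderiv B * N) g"
    using B(3) D_g by (simp add: D_poly)
  ultimately show ?case
    by (intro exI[of _ "map_poly D B + pderiv B * N"] conjI)
qed

lemma poly_derivative_not_lin_ode:
  assumes "g \<notin> k" "poly_over k N" "degree N \<ge> 2" "D g = poly N g"
  shows "\<not> satisfies_lin_ode D k g"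
proof
  assume "satisfies_lin_ode D k g"
  then obtain m c where c: "\<forall>i\<le>m. c i \<in> k" "c m \<noteq> 0" "(\<Sum>i\<le>m. c i * (D ^^ i) g) = 0"
    using satisfies_lin_ode_top_coeff by blast
  have "\<forall>i. \<exists>B. poly_over k B \<and> degree B = 1 + i * (degree N - 1) \<and> (D ^^ i) g = poly B g"
    using iterated_derivative_poly[OF assms(2-4)] by blast
  then obtain B where B: "\<forall>i. poly_over k (B i) \<and> degree (B i) = 1 + i * (degree N - 1) \<and>
      (D ^^ i) g = poly (B i) g"
    by (rule choice[THEN exE])
  have "(\<Sum>i\<le>m. smult (c i) (B i)) = 0"
    by (rule poly_over_relation_lifts[OF assms(1) c(1,3), of B 1]) (use B in simp_all)
  moreover have "coeff (\<Sum>i\<le>m. smult (c i) (B i)) (degree (B m)) = c m * lead_coeff (B m)"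
  proof -
    have "(\<Sum>i<m. c i * coeff (B i) (degree (B m))) = 0"
      using B assms(3) by (intro sum.neutral) (simp add: coeff_eq_0)
    then show ?thesis
      by (simp add: coeff_sum lessThan_Suc_atMost[symmetric])
  qed
  moreover have "B m \<noteq> 0"
    using B by (metis degree_0 add_is_0 one_neq_zero)
  ultimately show False
    using c(2) by simp
qed

context
  fixes g \<rho> :: 'a and M1 N :: "'a poly" and p :: nat
  assumes g_notin: "g \<notin> k" and \<rho>_in: "\<rho> \<in> k" and p_pos: "p \<ge> 1"
    and M1: "poly_over k M1" "poly M1 \<rho> \<noteq> 0" and N: "poly_over k N" "poly N \<rho> \<noteq> 0"
    and D_g: "D g * ((g - \<rho>) ^ p * poly M1 g) = poly N g"
begin

lemma pole_order_step:
  assumes A: "poly_over k A" "poly A \<rho> \<noteq> 0" and q: "q \<ge> 1"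
    and h: "h * ((g - \<rho>) ^ q * poly M1 g ^ e) = poly A g"
  shows "\<exists>A'. poly_over k A' \<and> poly A' \<rho> \<noteq> 0 \<and>
           D h * ((g - \<rho>) ^ (q + p + 1) * poly M1 g ^ (2 * e + 1)) = poly A' g"
proof -
  define L M W where "L = [:- \<rho>, 1:]" and "M = L ^ p * M1" and "W = M1 ^ e"
  define y \<mu> w where "y = g - \<rho>" and "\<mu> = poly M g" and "w = poly W g"
  define \<Delta> where "\<Delta> B = M * map_poly D B + pderiv B * N" for B
  define Y where "Y = N - smult (D \<rho>) M"
  have \<Delta>: "\<mu> * D (poly B g) = poly (\<Delta> B) g" for B
    using D_g by (simp add: \<Delta>_def \<mu>_def M_def L_def D_poly algebra_simps)
  have Y: "\<mu> * D y = poly Y g"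
    using D_g by (simp add: Y_def y_def \<mu>_def M_def L_def D_diff algebra_simps)
  have L: "poly_over k L" and W: "poly_over k W" and M: "poly_over k M"
    using \<rho>_in M1(1) by (simp_all add: L_def W_def M_def poly_over_intros)
  have \<Delta>_over: "poly_over k (\<Delta> B)" if "poly_over k B" for B
    using that M N(1) by (simp add: \<Delta>_def poly_over_intros poly_over_map_poly_D)
  \<comment> \<open>At \<rho> only the term coming from D((g - \<rho>)^q) survives, and q \<noteq> 0 in characteristic zero.\<close>
  define A' where "A' = \<Delta> A * L * W - A * (smult (of_nat q) Y * W + L * \<Delta> W)"
  have "poly A' \<rho> = - poly A \<rho> * (of_nat q * poly N \<rho> * poly W \<rho>)"
    using p_pos by (simp add: A'_def Y_def M_def L_def)
  then have "poly A' \<rho> \<noteq> 0"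
    using A(2) N(2) M1(2) q by (simp add: W_def)
  moreover have "poly_over k A'"
    using A(1) L W M N(1) \<rho>_in
    by (simp add: A'_def Y_def \<Delta>_over poly_over_intros of_nat_closed D_closed)
  moreover have "D h * (y ^ (q + p + 1) * poly M1 g ^ (2 * e + 1)) = poly A' g"
  proof -
    have D_yw: "D (y ^ q * w) = of_nat q * y ^ (q - 1) * D y * w + y ^ q * D w"
      by (simp add: D_mult D_power algebra_simps)
    have y_q: "y * y ^ (q - 1) = y ^ q"
      using q by (simp add: power_eq_if)
    have hw: "h * (y ^ q * w) = poly A g"
      using h by (simp add: y_def w_def W_def)
    have "D h * (y ^ (q + p + 1) * poly M1 g ^ (2 * e + 1)) = D h * (y ^ q * w) * (\<mu> * y * w)"
      unfolding \<mu>_def M_def W_def w_def power_add mult_2 by (simp add: L_def y_def mult_ac)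
    also have "D h * (y ^ q * w) = D (poly A g) - h * D (y ^ q * w)"
      by (simp add: D_mult[of h] flip: hw)
    also have "(D (poly A g) - h * D (y ^ q * w)) * (\<mu> * y * w)
        = \<mu> * D (poly A g) * y * w - poly A g * (of_nat q * (\<mu> * D y) * w + y * (\<mu> * D w))"
      unfolding D_yw hw[symmetric] by (simp add: algebra_simps y_q[symmetric])
    also have "\<dots> = poly A' g"
      using \<Delta>[of A] \<Delta>[of W] Y by (simp add: A'_def L_def w_def y_def algebra_simps)
    finally show ?thesis
      by (simp add: y_def)
  qed
  ultimately show ?thesis
    unfolding y_def by blast
qed

text \<open>The exponent of g - \<rho> is the exact pole order of D^i g at \<rho>; the power of M1 is
  merely a common denominator.\<close>

lemma iterated_derivative_pole:
  assumes "i \<ge> 1"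
  shows "\<exists>A. poly_over k A \<and> poly A \<rho> \<noteq> 0 \<and>
           (D ^^ i) g * ((g - \<rho>) ^ (i * (p + 1) - 1) * poly M1 g ^ (2 ^ i - 1)) = poly A g"
  using assms
proof (induction i rule: nat_induct_at_least)
  case base
  show ?case
    using N D_g by (intro exI[of _ N]) simp
next
  case (Suc i)
  then obtain A where A: "poly_over k A" "poly A \<rho> \<noteq> 0"
    "(D ^^ i) g * ((g - \<rho>) ^ (i * (p + 1) - 1) * poly M1 g ^ (2 ^ i - 1)) = poly A g"
    by blast
  have "1 * 2 \<le> i * (p + 1)"
    using Suc.hyps p_pos by (intro mult_le_mono) simp_all
  then have "i * (p + 1) \<ge> 2"
    by simp
  moreover have "2 * (2 ^ i - 1) + 1 = 2 ^ Suc i - (1::nat)"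
    using one_le_power[of "2::nat" i] by (simp only: power_Suc) linarith
  moreover have "i * (p + 1) - 1 + p + 1 = Suc i * (p + 1) - 1"
    using \<open>i * (p + 1) \<ge> 2\<close> by simp
  moreover have "i * (p + 1) - 1 \<ge> 1"
    using \<open>i * (p + 1) \<ge> 2\<close> by simp
  ultimately show ?case
    using pole_order_step[OF A(1,2) _ A(3)] by (simp only: funpow.simps(2) o_apply)
qed

lemma iterated_derivatives_common_denominator:
  assumes "m \<ge> 1"
  obtains T h where "\<And>i. i \<le> m \<Longrightarrow> poly_over k (T i)"
    "\<And>i. i \<le> m \<Longrightarrow> poly (T i) g = (D ^^ i) g * h"
    "\<And>i. i < m \<Longrightarrow> poly (T i) \<rho> = 0" "poly (T m) \<rho> \<noteq> 0"
proof -
  obtain A where A: "\<And>i. i \<ge> 1 \<Longrightarrow> poly_over k (A i) \<and> poly (A i) \<rho> \<noteq> 0 \<and>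
      (D ^^ i) g * ((g - \<rho>) ^ (i * (p + 1) - 1) * poly M1 g ^ (2 ^ i - 1)) = poly (A i) g"
    using iterated_derivative_pole by metis
  define q e :: "nat \<Rightarrow> nat" where "q i = i * (p + 1) - 1" and "e i = 2 ^ i - 1" for i
  define A\<^sub>0 where "A\<^sub>0 i = (if i = 0 then [:0, 1:] else A i)" for i
  define T where "T i = A\<^sub>0 i * [:- \<rho>, 1:] ^ (q m - q i) * M1 ^ (e m - e i)" for i
  have q_less: "q i < q m" if "i < m" for i
  proof -
    have "1 * 2 \<le> m * (p + 1)"
      using assms p_pos by (intro mult_le_mono) simp_all
    moreover have "i * (p + 1) < m * (p + 1)"
      using that by (intro mult_less_mono1) simp_all
    ultimately show ?thesis
      unfolding q_def by linarith
  qed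
  have e_le: "e i \<le> e m" if "i \<le> m" for i
    using that by (simp add: e_def diff_le_mono power_increasing)
  show ?thesis
  proof (rule that)
    fix i assume "i \<le> m"
    then have "q i \<le> q m" "e i \<le> e m"
      using q_less e_le by (auto simp: le_less)
    then have split: "(g - \<rho>) ^ q m * poly M1 g ^ e m =
        (g - \<rho>) ^ q i * poly M1 g ^ e i * ((g - \<rho>) ^ (q m - q i) * poly M1 g ^ (e m - e i))"
      by (simp add: mult_ac flip: power_add)
    have "poly (T i) g = (D ^^ i) g * ((g - \<rho>) ^ q i * poly M1 g ^ e i) *
        ((g - \<rho>) ^ (q m - q i) * poly M1 g ^ (e m - e i))"
      using A[of i] by (cases "i = 0") (simp_all add: T_def A\<^sub>0_def q_def e_def)
    then show "poly (T i) g = (D ^^ i) g * ((g - \<rho>) ^ q m * poly M1 g ^ e m)"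
      unfolding split by (simp only: mult.assoc)
    have "poly_over k (A\<^sub>0 i)"
      using A[of i] by (simp add: A\<^sub>0_def poly_over_X)
    then show "poly_over k (T i)"
      using M1(1) \<rho>_in by (simp add: T_def poly_over_intros)
  next
    show "poly (T i) \<rho> = 0" if "i < m" for i
      using q_less[OF that] by (simp add: T_def)
    show "poly (T m) \<rho> \<noteq> 0"
      using A[OF assms] M1(2) assms by (simp add: T_def A\<^sub>0_def)
  qed
qed

lemma pole_not_lin_ode: "\<not> satisfies_lin_ode D k g"
proof
  assume "satisfies_lin_ode D k g"
  then obtain m c where c: "\<forall>i\<le>m. c i \<in> k" "c m \<noteq> 0" "(\<Sum>i\<le>m. c i * (D ^^ i) g) = 0"
    using satisfies_lin_ode_top_coeff by blast
  have "m \<ge> 1"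
  proof (rule ccontr)
    assume "\<not> m \<ge> 1"
    then have "m = 0"
      by simp
    then show False
      using c(2,3) g_notin by simp
  qed
  then obtain T h where T: "\<And>i. i \<le> m \<Longrightarrow> poly_over k (T i)"
    "\<And>i. i \<le> m \<Longrightarrow> poly (T i) g = (D ^^ i) g * h"
    "\<And>i. i < m \<Longrightarrow> poly (T i) \<rho> = 0" "poly (T m) \<rho> \<noteq> 0"
    using iterated_derivatives_common_denominator by blast
  have "(\<Sum>i\<le>m. smult (c i) (T i)) = 0"
    using poly_over_relation_lifts[OF g_notin c(1,3)] T(1,2) by blast
  then have "(\<Sum>i\<le>m. c i * poly (T i) \<rho>) = 0"
    using poly_sum[of "\<lambda>i. smult (c i) (T i)" "{..m}" \<rho>] by simp
  moreover have "(\<Sum>i<m. c i * poly (T i) \<rho>) = 0"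
    using T(3) by simp
  ultimately have "c m * poly (T m) \<rho> = 0"
    by (simp add: lessThan_Suc_atMost[symmetric])
  then show False
    using c(2) T(4) by simp
qed

end

lemma derivative_affine_if_rational:
  assumes g_notin: "g \<notin> k" and ode: "satisfies_lin_ode D k g"
    and "poly_over k M" "M \<noteq> 0" "poly_over k N" "D g * poly M g = poly N g"
  shows "\<exists>\<alpha>\<in>k. \<exists>\<beta>\<in>k. D g = \<alpha> * g + \<beta>"
proof -
  obtain M' N' where M': "poly_over k M'" "M' \<noteq> 0" and N': "poly_over k N'"
    and D_g: "D g * poly M' g = poly N' g"
    and coprime: "\<And>\<rho>. \<rho> \<in> k \<Longrightarrow> poly M' \<rho> = 0 \<Longrightarrow> poly N' \<rho> \<noteq> 0"
    using reduced_fraction_representation[OF g_notin assms(3-6)] by blast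
  show ?thesis
  proof (cases "degree M' = 0")
    case True
    then obtain c where c: "M' = [:c:]"
      by (metis degree_eq_zeroE)
    then have "c \<in> k" "c \<noteq> 0"
      using M' by (simp_all add: poly_over_pCons_iff)
    define N'' where "N'' = smult (inverse c) N'"
    have N'': "poly_over k N''"
      using N' \<open>c \<in> k\<close> by (simp add: N''_def poly_over_smult inverse_closed)
    have D_g': "D g = poly N'' g"
      using D_g c \<open>c \<noteq> 0\<close> by (simp add: N''_def field_simps)
    have "degree N'' \<le> 1"
      using poly_derivative_not_lin_ode[OF g_notin N'' _ D_g'] ode by linarith
    then have "D g = coeff N'' 1 * g + coeff N'' 0"
      using D_g' poly_degree_le_1 by simp
    moreover have "coeff N'' 1 \<in> k" "coeff N'' 0 \<in> k"
      using N'' by (simp_all add: poly_over_def)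
    ultimately show ?thesis
      by blast
  next
    case False
    then obtain \<rho> where \<rho>: "\<rho> \<in> k" "poly M' \<rho> = 0"
      using poly_over_has_root M'(1) by (auto simp: Suc_le_eq)
    obtain p M1 where M1: "poly_over k M1" "M' = [:- \<rho>, 1:] ^ p * M1" "poly M1 \<rho> \<noteq> 0"
      using poly_over_factor_root[OF M' \<rho>(1)] by blast
    have "p \<ge> 1"
    proof (rule ccontr)
      assume "\<not> p \<ge> 1"
      then have "p = 0"
        by simp
      then show False
        using \<rho>(2) M1(2,3) by simp
    qed
    moreover have "D g * ((g - \<rho>) ^ p * poly M1 g) = poly N' g"
      using D_g M1(2) by simp
    ultimately have "\<not> satisfies_lin_ode D k g"
      using pole_not_lin_ode[OF g_notin \<rho>(1) _ M1(1,3) N' coprime[OF \<rho>]] by blast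
    then show ?thesis
      using ode by blast
  qed
qed

lemma log_derivative_at_root:
  assumes g_notin: "g \<notin> k" and \<alpha>\<beta>: "\<alpha> \<in> k" "\<beta> \<in> k" and D_g: "D g = \<alpha> * g + \<beta>"
    and "a \<in> k" and D_P: "D (poly P g) = a * poly P g"
    and P: "poly_over k P" "P \<noteq> 0" and r: "r \<in> k" "poly P r = 0"
  shows "D (g - r) = \<alpha> * (g - r)"
proof -
  obtain e Q where Q: "poly_over k Q" "P = [:- r, 1:] ^ e * Q" "poly Q r \<noteq> 0"
    using poly_over_factor_root[OF P r(1)] by blast
  obtain e0 where e: "e = Suc e0"
    using Q r(2) by (cases e) auto
  define y \<gamma> where "y = g - r" and "\<gamma> = \<alpha> * r + \<beta> - D r"
  define Z where "Z = map_poly D Q + pderiv Q * [:\<beta>, \<alpha>:]"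
  \<comment> \<open>R(g) = (D(P(g)) - a P(g)) / y^(e - 1), and R(r) = e \<gamma> Q(r).\<close>
  define R where "R = smult (of_nat e * \<gamma>) Q + [:- r, 1:] * (smult (of_nat e * \<alpha>) Q + Z - smult a Q)"
  have D_y: "D y = \<alpha> * y + \<gamma>"
    by (simp add: y_def \<gamma>_def D_diff D_g algebra_simps)
  have D_Q: "D (poly Q g) = poly Z g"
    by (simp add: Z_def D_poly D_g algebra_simps)
  have P_g: "poly P g = y ^ e * poly Q g"
    by (simp add: Q(2) y_def)
  have "D (poly P g) = y ^ e * poly Z g + of_nat e * y ^ e0 * (\<alpha> * y + \<gamma>) * poly Q g"
    unfolding P_g D_mult D_power D_y D_Q by (simp add: e)
  then have "y ^ e0 * poly R g = D (poly P g) - a * poly P g"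
    unfolding P_g by (simp add: R_def y_def e algebra_simps)
  moreover have "y \<noteq> 0"
    using g_notin r(1) by (auto simp: y_def)
  ultimately have "poly R g = 0"
    using D_P by simp
  moreover have "poly_over k R"
    using Q(1) \<alpha>\<beta> \<open>a \<in> k\<close> r(1)
    by (simp add: R_def Z_def \<gamma>_def poly_over_intros poly_over_map_poly_D poly_over_pCons_iff
        mult_closed of_nat_closed add_closed diff_closed D_closed)
  ultimately have "R = 0"
    using poly_over_eq_0_if_root_notin g_notin by blast
  moreover have "poly R r = of_nat e * \<gamma> * poly Q r"
    by (simp add: R_def)
  ultimately have "of_nat e * \<gamma> * poly Q r = 0"
    by simp
  then have "\<gamma> = 0"
    using Q(3) e by (simp del: of_nat_Suc)
  then show ?thesis
    using D_y by (simp add: y_def)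
qed

lemma log_derivative_root_unique:
  assumes "g \<notin> k" "r \<in> k" "s \<in> k" "D (g - r) = \<alpha> * (g - r)" "D (g - s) = \<alpha> * (g - s)"
  shows "r = s"
proof (rule ccontr)
  assume "r \<noteq> s"
  then have w: "s - r \<noteq> 0"
    by simp
  have "D (s - r) = D (g - r) - D (g - s)"
    using D_diff[of "g - r" "g - s"] by simp
  then have "D (s - r) = \<alpha> * (s - r)"
    using assms(4,5) by (simp add: algebra_simps)
  then have "D ((g - r) / (s - r)) = 0"
    using D_divide_eq_0_if_same_log_derivative[OF w assms(4)] by blast
  then have "(g - r) / (s - r) \<in> k"
    by (rule constant_in_k)
  then have "(g - r) / (s - r) * (s - r) + r \<in> k"
    using assms(2,3) by (intro add_closed mult_closed diff_closed)
  then show False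
    using w assms(1) by simp
qed

lemma power_form_if_log_derivative:
  assumes "g \<notin> k" "\<alpha> \<in> k" "r \<in> k" "D (g - r) = \<alpha> * (g - r)"
    and "u \<in> k" "u \<noteq> 0" "e \<ge> 1" "f = u * (g - r) ^ e"
  shows "\<exists>\<theta> (n::nat) c d. \<theta> \<noteq> 0 \<and> D \<theta> / \<theta> \<in> k \<and> c \<in> k \<and> d \<in> k \<and>
           f = \<theta> ^ n \<and> g = c + d * \<theta>"
proof -
  obtain v where v: "v \<in> k" "v ^ e = u"
    using nth_root_closed assms(5,7) by blast
  then have "v \<noteq> 0"
    using assms(6,7) by auto
  moreover have "g - r \<noteq> 0"
    using assms(1,3) by auto
  moreover have D_\<theta>: "D (v * (g - r)) = (D v + v * \<alpha>) * (g - r)"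
    unfolding D_mult assms(4) by (simp add: algebra_simps)
  ultimately have "D (v * (g - r)) / (v * (g - r)) = D v / v + \<alpha>"
    unfolding D_\<theta> by (simp add: field_simps)
  then have "D (v * (g - r)) / (v * (g - r)) \<in> k"
    using v(1) assms(2) by (simp add: add_closed divide_closed D_closed)
  moreover have "f = (v * (g - r)) ^ e"
    using assms(8) v(2) by (simp add: power_mult_distrib)
  moreover have "g = r + inverse v * (v * (g - r))"
    using \<open>v \<noteq> 0\<close> by (simp add: mult.assoc[symmetric])
  ultimately show ?thesis
    using \<open>v \<noteq> 0\<close> \<open>g - r \<noteq> 0\<close> assms(3) v(1) inverse_closed
    by (intro exI[of _ "v * (g - r)"] exI[of _ e] exI[of _ r] exI[of _ "inverse v"]) simp
qed

lemma derivative_affine_if_poly_exponential: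
  assumes "g \<notin> k" "satisfies_lin_ode D k g" "poly_over k P" "degree P \<ge> 1" "a \<in> k"
    and "D (poly P g) = a * poly P g"
  shows "\<exists>\<alpha>\<in>k. \<exists>\<beta>\<in>k. D g = \<alpha> * g + \<beta>"
proof (rule derivative_affine_if_rational[OF assms(1,2)])
  show "poly_over k (pderiv P)" "poly_over k (smult a P - map_poly D P)"
    using assms(3,5) by (simp_all add: poly_over_intros poly_over_map_poly_D)
  show "pderiv P \<noteq> 0"
    using assms(4) by (simp add: pderiv_eq_0_iff)
  show "D g * poly (pderiv P) g = poly (smult a P - map_poly D P) g"
    using assms(6) by (simp add: D_poly algebra_simps)
qed

end

theorem corollary13:
  fixes D :: "'a::field_char_0 \<Rightarrow> 'a" and k :: "'a set"
    and f g a :: 'a and P :: "'a poly"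
  assumes "derivation D"
    and "differential_subfield D k"
    and "alg_closed_subfield k"
    and "constants D \<inter> k = constants D"
    and "f \<noteq> 0" and "a \<in> k" and "D f = a * f"
    and "satisfies_lin_ode D k g"
    and "set (coeffs P) \<subseteq> k" and "degree P \<ge> 1"
    and "f = poly P g"
  shows "\<exists>\<theta> (n::nat) c d. \<theta> \<noteq> 0 \<and> D \<theta> / \<theta> \<in> k \<and> c \<in> k \<and> d \<in> k \<and>
           f = \<theta> ^ n \<and> g = c + d * \<theta>"
proof -
  interpret differential_extension D k
    using assms(1-4) by unfold_locales (auto simp: differential_subfield_def constants_def)
  have P: "poly_over k P" "P \<noteq> 0"
    using assms(9,10) by (auto simp: poly_over_iff_coeffs)
  show ?thesis
  proof (cases "g \<in> k")
    case True
    then show ?thesis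
      using assms(5-7) by (intro exI[of _ f] exI[of _ "1::nat"] exI[of _ g] exI[of _ 0]) simp
  next
    case False
    have D_P: "D (poly P g) = a * poly P g"
      using assms(7,11) by simp
    obtain \<alpha> \<beta> where \<alpha>\<beta>: "\<alpha> \<in> k" "\<beta> \<in> k" "D g = \<alpha> * g + \<beta>"
      using derivative_affine_if_poly_exponential[OF False assms(8) P(1) assms(10,6) D_P] by blast
    obtain r where r: "r \<in> k" "poly P r = 0"
      using poly_over_has_root P(1) assms(10) by blast
    have log: "D (g - s) = \<alpha> * (g - s)" if "s \<in> k" "poly P s = 0" for s
      using log_derivative_at_root[OF False \<alpha>\<beta> assms(6) D_P P that] .
    have "s = r" if "s \<in> k" "poly P s = 0" for s
      using log_derivative_root_unique[OF False r(1) that(1) log[OF r] log[OF that]] by simp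
    then obtain u e where "u \<in> k" "u \<noteq> 0" "e \<ge> 1" "P = smult u ([:- r, 1:] ^ e)"
      using poly_over_single_root[OF P(1) assms(10) r(1)] by blast
    then show ?thesis
      using power_form_if_log_derivative[OF False \<alpha>\<beta>(1) r(1) log[OF r]] assms(11) by simp
  qed
qed

end
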